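(* For $n\ge4$, any two distinct chambers $\Delta_{\pi}\neq\Delta_{\pi'}$ of $\mathfrak S_n$ intersect (if at all) in a face of dimension at most $(n-3)(n-2)/2-1$; equivalently, for two distinct circular orderings $\pi,\pi'$ of $X$, at most $(n-3)(n-2)/2$ nontrivial splits are circular with respect to both $\pi$ and $\pi'$.
   Context: $X$ is a set of $n\ge4$ labels. A split of $X$ is an unordered partition of $X$ into two nonempty sets; it is trivial if one part is a singleton. A circular ordering of $X$ is a cyclic arrangement $\pi=(x_1,\dots,x_n)$ up to rotation and reflection; a split is circular w.r.t. $\pi$ if it has the form $\{\{x_{i+1},\dots,x_j\},X\setminus\{x_{i+1},\dots,x_j\}\}$ (indices mod $n$). Give $\mathbb R^\delta$, $\delta=2^{n-1}-n-1$, coordinates indexed by nontrivial splits. For each circular ordering $\pi$, the chamber $\Delta_\pi$ is the set of nonnegative vectors with coordinate sum $1$ supported on splits circular w.r.t. $\pi$ (a simplex of dimension $n(n-3)/2-1$), and $\mathfrak S_n=\bigcup_\pi\Delta_\pi$. *)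

theory Defs
  imports Main
begin

text \<open>A circular ordering of X is represented by a list enumerating X without repetition;
two lists represent the same circular ordering iff they differ by a rotation and/or reflection.\<close>

definition circular_ordering :: "'a set \<Rightarrow> 'a list \<Rightarrow> bool" where
  "circular_ordering X xs \<longleftrightarrow> distinct xs \<and> set xs = X"

definition same_circular_ordering :: "'a list \<Rightarrow> 'a list \<Rightarrow> bool" where
  "same_circular_ordering xs ys \<longleftrightarrow> (\<exists>r. ys = rotate r xs \<or> ys = rotate r (rev xs))"

definition split_of :: "'a set \<Rightarrow> 'a set set \<Rightarrow> bool" where
  "split_of X S \<longleftrightarrow> (\<exists>A. A \<subseteq> X \<and> A \<noteq> {} \<and> A \<noteq> X \<and> S = {A, X - A})"

definition nontrivial_split :: "'a set \<Rightarrow> 'a set set \<Rightarrow> bool" where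
  "nontrivial_split X S \<longleftrightarrow>
     split_of X S \<and> (\<forall>A\<in>S. card A \<ge> 2)"

text \<open>A split is circular w.r.t. the ordering xs if one part is a cyclic interval
 {x_(i+1),...,x_j}, i.e. a proper nonempty prefix of some rotation of xs.\<close>

definition circular_split :: "'a list \<Rightarrow> 'a set set \<Rightarrow> bool" where
  "circular_split xs S \<longleftrightarrow>
     (\<exists>r l. 0 < l \<and> l < length xs \<and>
        S = {set (take l (rotate r xs)), set xs - set (take l (rotate r xs))})"

end

theory Submission
  imports Defs
begin

text \<open>Since p and q are different circular orderings, some two neighbours a, x of p are not
neighbours in q: otherwise walking along p is also a walk along q, and it recovers q up to rotation
and reflection. Rotate p to a list c = [x, ..., a] of length n. Every nontrivial split that is
circular for c has a part avoiding a, a segment c_i ... c_(j-1) with i + 2 <= j <= n - 1, and there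
are (n - 3)(n - 2)/2 such segments with i >= 1. Each segment c_0 ... c_(j-1) that is also an arc of
q is charged injectively to a segment with i >= 1 that is not an arc of q: to c_(j-1) ... c_(n-2) if
that is not an arc of q, and otherwise to c_1 ... c_(j-1), for if all three sets were arcs of q
then x and a would be neighbours in q.\<close>

section \<open>Arcs of a circular ordering\<close>

definition cyclic_offset :: "nat \<Rightarrow> nat \<Rightarrow> nat \<Rightarrow> nat" where
  "cyclic_offset n r w = (if r \<le> w then w - r else w + n - r)"

definition arc :: "'a list \<Rightarrow> nat \<Rightarrow> nat \<Rightarrow> 'a set" where
  "arc xs r l = {xs ! w | w. w < length xs \<and> cyclic_offset (length xs) r w < l}"

definition is_arc :: "'a list \<Rightarrow> 'a set \<Rightarrow> bool" where
  "is_arc xs A \<longleftrightarrow> (\<exists>r l. r < length xs \<and> 0 < l \<and> l < length xs \<and> A = arc xs r l)"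

lemma nth_mem_arc_iff:
  assumes "distinct xs" "w < length xs"
  shows "xs ! w \<in> arc xs r l \<longleftrightarrow> cyclic_offset (length xs) r w < l"
  using assms by (auto simp: arc_def nth_eq_iff_index_eq)

lemma arc_subset: "arc xs r l \<subseteq> set xs"
  by (auto simp: arc_def)

lemma is_arc_subset: "is_arc xs A \<Longrightarrow> A \<subseteq> set xs"
  unfolding is_arc_def by (elim exE conjE) (simp add: arc_subset)

lemma add_mod_eq_if:
  assumes "r < n" "t < (n::nat)"
  shows "(r + t) mod n = (if r + t < n then r + t else r + t - n)"
  using assms by (simp add: mod_if)

lemma set_take_rotate_eq_arc:
  assumes "r < length xs" "l \<le> length xs"
  shows "set (take l (rotate r xs)) = arc xs r l"
proof -
  let ?n = "length xs"
  have "y \<in> set (take l (rotate r xs)) \<longleftrightarrow> (\<exists>t<l. y = xs ! ((r + t) mod ?n))" for y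
    using assms by (auto simp: in_set_conv_nth nth_rotate)
  moreover have "(\<exists>t<l. y = xs ! ((r + t) mod ?n)) \<longleftrightarrow> y \<in> arc xs r l" for y
  proof
    assume "\<exists>t<l. y = xs ! ((r + t) mod ?n)"
    then obtain t where "t < l" "y = xs ! ((r + t) mod ?n)" by blast
    moreover have "(r + t) mod ?n < ?n" "cyclic_offset ?n r ((r + t) mod ?n) = t"
      using assms \<open>t < l\<close> by (auto simp: add_mod_eq_if cyclic_offset_def)
    ultimately show "y \<in> arc xs r l" unfolding arc_def by auto
  next
    assume "y \<in> arc xs r l"
    then obtain w where w: "w < ?n" "cyclic_offset ?n r w < l" "y = xs ! w"
      unfolding arc_def by blast
    have "(r + cyclic_offset ?n r w) mod ?n = w"
      using w assms by (auto simp: cyclic_offset_def add_mod_eq_if)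
    with w show "\<exists>t<l. y = xs ! ((r + t) mod ?n)" by auto
  qed
  ultimately show ?thesis by blast
qed

lemma card_arc:
  assumes "distinct xs" "r < length xs" "l \<le> length xs"
  shows "card (arc xs r l) = l"
proof -
  have "card (set (take l (rotate r xs))) = l"
    using assms by (simp add: distinct_card)
  then show ?thesis using set_take_rotate_eq_arc[OF assms(2,3)] by simp
qed

lemma circular_split_iff_is_arc:
  assumes "xs \<noteq> []"
  shows "circular_split xs S \<longleftrightarrow> (\<exists>A. is_arc xs A \<and> S = {A, set xs - A})"
proof
  assume "circular_split xs S"
  then obtain r l where rl: "0 < l" "l < length xs"
    "S = {set (take l (rotate r xs)), set xs - set (take l (rotate r xs))}"
    unfolding circular_split_def by blast
  have "set (take l (rotate r xs)) = arc xs (r mod length xs) l"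
    using rl assms set_take_rotate_eq_arc[of "r mod length xs" xs l]
    by (simp flip: rotate_conv_mod)
  moreover have "r mod length xs < length xs" using assms by simp
  ultimately show "\<exists>A. is_arc xs A \<and> S = {A, set xs - A}"
    using rl unfolding is_arc_def by blast
next
  assume "\<exists>A. is_arc xs A \<and> S = {A, set xs - A}"
  then show "circular_split xs S"
    unfolding is_arc_def circular_split_def by (metis less_imp_le set_take_rotate_eq_arc)
qed

lemma cyclic_offset_complement:
  assumes "r < n" "l < n" "w < n"
  shows "\<not> cyclic_offset n r w < l \<longleftrightarrow> cyclic_offset n ((r + l) mod n) w < n - l"
  using assms by (auto simp: cyclic_offset_def add_mod_eq_if)

lemma arc_complement:
  assumes "distinct xs" "r < length xs" "l < length xs"
  shows "set xs - arc xs r l = arc xs ((r + l) mod length xs) (length xs - l)"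
proof (intro set_eqI iffI)
  fix y assume "y \<in> set xs - arc xs r l"
  then obtain w where "w < length xs" "y = xs ! w" "y \<notin> arc xs r l"
    by (auto simp: in_set_conv_nth)
  then show "y \<in> arc xs ((r + l) mod length xs) (length xs - l)"
    using assms cyclic_offset_complement[of r "length xs" l w] by (simp add: nth_mem_arc_iff)
next
  fix y assume y: "y \<in> arc xs ((r + l) mod length xs) (length xs - l)"
  then obtain w where "w < length xs" "y = xs ! w"
    unfolding arc_def by blast
  with y show "y \<in> set xs - arc xs r l"
    using assms cyclic_offset_complement[of r "length xs" l w] by (simp add: nth_mem_arc_iff)
qed

lemma is_arc_complement:
  assumes "distinct xs" "is_arc xs A"
  shows "is_arc xs (set xs - A)"
proof -
  obtain r l where rl: "r < length xs" "0 < l" "l < length xs" "A = arc xs r l"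
    using assms unfolding is_arc_def by blast
  have "set xs - A = arc xs ((r + l) mod length xs) (length xs - l)"
    using arc_complement[OF assms(1) rl(1,3)] rl(4) by simp
  moreover have "(r + l) mod length xs < length xs"
    using rl(1) by (intro mod_less_divisor) linarith
  moreover have "0 < length xs - l" "length xs - l < length xs"
    using rl by auto
  ultimately show ?thesis unfolding is_arc_def by (intro exI conjI) assumption+
qed

lemma is_arc_if_mem_circular_split:
  assumes "distinct xs" "circular_split xs S" "A \<in> S"
  shows "is_arc xs A"
proof -
  have "xs \<noteq> []" using assms(2) unfolding circular_split_def by (elim exE conjE) auto
  then have "\<exists>B. is_arc xs B \<and> S = {B, set xs - B}"
    using assms(2) by (simp flip: circular_split_iff_is_arc)
  then obtain B where B: "is_arc xs B" "S = {B, set xs - B}" by (elim exE conjE)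
  then have "A = B \<or> A = set xs - B" using assms(3) by simp
  then show ?thesis using B(1) is_arc_complement[OF assms(1) B(1)] by (elim disjE) simp_all
qed

lemma circular_split_rotate:
  assumes "xs \<noteq> []"
  shows "circular_split (rotate k xs) S \<longleftrightarrow> circular_split xs S"
proof
  assume "circular_split (rotate k xs) S"
  then show "circular_split xs S"
    unfolding circular_split_def by (auto simp: rotate_rotate)
next
  assume "circular_split xs S"
  then obtain r l where rl: "0 < l" "l < length xs"
    "S = {set (take l (rotate r xs)), set xs - set (take l (rotate r xs))}"
    unfolding circular_split_def by blast
  let ?n = "length xs"
  have "k mod ?n < ?n" using assms by simp
  then have "r + (?n - k mod ?n) + k mod ?n = r + ?n" by linarith
  then have "(r + (?n - k mod ?n) + k) mod ?n = r mod ?n"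
    by (metis mod_add_right_eq mod_add_self2)
  then have "rotate (r + (?n - k mod ?n)) (rotate k xs) = rotate r xs"
    by (metis rotate_conv_mod rotate_rotate)
  then have "S = {set (take l (rotate (r + (?n - k mod ?n)) (rotate k xs))),
      set (rotate k xs) - set (take l (rotate (r + (?n - k mod ?n)) (rotate k xs)))}"
    using rl(3) by (simp only: set_rotate)
  with rl(1,2) show "circular_split (rotate k xs) S"
    unfolding circular_split_def length_rotate by (intro exI conjI) assumption+
qed

lemma is_arc_iff_circular_split:
  assumes "distinct xs" "xs \<noteq> []"
  shows "is_arc xs A \<longleftrightarrow> circular_split xs {A, set xs - A}"
proof
  assume "is_arc xs A"
  then show "circular_split xs {A, set xs - A}"
    using circular_split_iff_is_arc[OF assms(2)] by blast
next
  assume "circular_split xs {A, set xs - A}"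
  then show "is_arc xs A"
    using is_arc_if_mem_circular_split[OF assms(1)] by blast
qed

lemma is_arc_rotate:
  assumes "distinct xs"
  shows "is_arc (rotate k xs) A \<longleftrightarrow> is_arc xs A"
proof (cases "xs = []")
  case False
  then show ?thesis
    using assms circular_split_rotate[OF False] is_arc_iff_circular_split[of xs]
      is_arc_iff_circular_split[of "rotate k xs"] by simp
qed (simp add: is_arc_def)

lemma cyclic_offset_convex:
  assumes "r < n" "u < v" "v < n" "cyclic_offset n r u < l" "cyclic_offset n r v < l"
  shows "(\<forall>w. u \<le> w \<and> w \<le> v \<longrightarrow> cyclic_offset n r w < l)
    \<or> (\<forall>w<n. w \<le> u \<or> v \<le> w \<longrightarrow> cyclic_offset n r w < l)"
proof (cases "u < r \<and> r \<le> v")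
  case True
  then have "\<forall>w<n. w \<le> u \<or> v \<le> w \<longrightarrow> cyclic_offset n r w < l"
    using assms unfolding cyclic_offset_def by auto
  then show ?thesis ..
next
  case False
  then have "\<forall>w. u \<le> w \<and> w \<le> v \<longrightarrow> cyclic_offset n r w < l"
    using assms unfolding cyclic_offset_def by auto
  then show ?thesis ..
qed

lemma arc_convex:
  assumes "distinct xs" "is_arc xs A" "u < v" "v < length xs" "xs ! u \<in> A" "xs ! v \<in> A"
  shows "(\<forall>w. u \<le> w \<and> w \<le> v \<longrightarrow> xs ! w \<in> A)
    \<or> (\<forall>w<length xs. w \<le> u \<or> v \<le> w \<longrightarrow> xs ! w \<in> A)"
proof -
  obtain r l where rl: "r < length xs" "A = arc xs r l"
    using assms(2) unfolding is_arc_def by blast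
  have mem: "xs ! w \<in> A \<longleftrightarrow> cyclic_offset (length xs) r w < l" if "w < length xs" for w
    using nth_mem_arc_iff[OF assms(1) that] rl(2) by simp
  have "cyclic_offset (length xs) r u < l" "cyclic_offset (length xs) r v < l"
    using mem assms(3-6) by auto
  from cyclic_offset_convex[OF rl(1) assms(3,4) this] show ?thesis
  proof (elim disjE)
    assume "\<forall>w. u \<le> w \<and> w \<le> v \<longrightarrow> cyclic_offset (length xs) r w < l"
    then show ?thesis using mem assms(4) by (intro disjI1) auto
  next
    assume "\<forall>w<length xs. w \<le> u \<or> v \<le> w \<longrightarrow> cyclic_offset (length xs) r w < l"
    then show ?thesis using mem by (intro disjI2) auto
  qed
qed

lemma arc_convex_outside:
  assumes "distinct xs" "is_arc xs A" "u < w" "w < v" "v < length xs"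
    and "xs ! u \<in> A" "xs ! v \<in> A" "xs ! w \<notin> A"
  shows "\<forall>w'<length xs. w' \<le> u \<or> v \<le> w' \<longrightarrow> xs ! w' \<in> A"
  using arc_convex[OF assms(1,2) _ assms(5,6,7)] assms(3,4,8) by force

lemma arc_convex_between:
  assumes "distinct xs" "is_arc xs A" "u < v" "v < length xs" "w < length xs" "w < u \<or> v < w"
    and "xs ! u \<in> A" "xs ! v \<in> A" "xs ! w \<notin> A"
  shows "\<forall>w'. u \<le> w' \<and> w' \<le> v \<longrightarrow> xs ! w' \<in> A"
  using arc_convex[OF assms(1-4,7,8)] assms(5,6,9) by force

lemma arc_two:
  assumes "r < length xs" "2 < length xs"
  shows "arc xs r 2 = {xs ! r, xs ! (Suc r mod length xs)}"
proof -
  have "0 < length (rotate r xs)" "1 < length (rotate r xs)"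
    unfolding length_rotate using assms(2) by linarith+
  then have "take 2 (rotate r xs) = [rotate r xs ! 0, rotate r xs ! 1]"
    by (simp add: take_Suc_conv_app_nth numeral_2_eq_2)
  moreover have "rotate r xs ! 0 = xs ! r" "rotate r xs ! 1 = xs ! (Suc r mod length xs)"
    using assms(1) \<open>0 < length (rotate r xs)\<close> \<open>1 < length (rotate r xs)\<close>
    by (simp_all add: nth_rotate)
  ultimately show ?thesis
    using assms set_take_rotate_eq_arc[of r xs 2] by simp
qed

lemma is_arc_pair_iff:
  assumes "distinct xs" "3 \<le> length xs" "u < length xs" "v < length xs" "u \<noteq> v"
  shows "is_arc xs {xs ! u, xs ! v} \<longleftrightarrow> v = Suc u mod length xs \<or> u = Suc v mod length xs"
proof
  assume "is_arc xs {xs ! u, xs ! v}"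
  then obtain r l where rl: "r < length xs" "l < length xs" "{xs ! u, xs ! v} = arc xs r l"
    unfolding is_arc_def by blast
  have "card {xs ! u, xs ! v} = 2" using assms by (simp add: nth_eq_iff_index_eq)
  then have "l = 2" using card_arc[OF assms(1) rl(1)] rl by simp
  then have "{xs ! u, xs ! v} = {xs ! r, xs ! (Suc r mod length xs)}"
    using rl arc_two[OF rl(1)] assms(2) by simp
  moreover have "Suc r mod length xs < length xs" using rl(1) by (intro mod_less_divisor) linarith
  ultimately have "(u = r \<and> v = Suc r mod length xs) \<or> (u = Suc r mod length xs \<and> v = r)"
    using assms(1,3,4) rl(1) by (simp add: doubleton_eq_iff nth_eq_iff_index_eq)
  then show "v = Suc u mod length xs \<or> u = Suc v mod length xs" by blast
next
  have arc: "is_arc xs {xs ! a, xs ! (Suc a mod length xs)}" if "a < length xs" for a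
    unfolding is_arc_def using arc_two[OF that] assms(2) that
    by (intro exI[of _ a] exI[of _ 2]) simp
  assume "v = Suc u mod length xs \<or> u = Suc v mod length xs"
  then show "is_arc xs {xs ! u, xs ! v}"
  proof (elim disjE)
    assume "v = Suc u mod length xs"
    then show ?thesis using arc[OF assms(3)] by simp
  next
    assume "u = Suc v mod length xs"
    then show ?thesis using arc[OF assms(4)] by (simp add: insert_commute)
  qed
qed

section \<open>Recovering a circular ordering from its neighbour pairs\<close>

lemma cyclic_walk_forward:
  fixes g :: "nat \<Rightarrow> nat"
  assumes inj: "inj_on g {..<n}" and range: "\<And>t. t < n \<Longrightarrow> g t < n"
    and "g 0 = 0" "g 1 = 1"
    and step: "\<And>t. Suc t < n \<Longrightarrow> g (Suc t) = Suc (g t) mod n \<or> g t = Suc (g (Suc t)) mod n"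
  shows "t < n \<Longrightarrow> g t = t"
proof (induction t rule: less_induct)
  case (less t)
  show ?case
  proof (cases t)
    case (Suc t')
    show ?thesis
    proof (cases t')
      case (Suc s)
      have prev: "g s = s" "g (Suc s) = Suc s" using less \<open>t = Suc t'\<close> Suc by simp_all
      have "g t < n" using range less(2) .
      moreover have "g t \<noteq> s"
      proof
        assume "g t = s"
        then have "g t = g s" using prev by simp
        then have "t = s" using inj_on_eq_iff[OF inj, of t s] less(2) \<open>t = Suc t'\<close> Suc by simp
        then show False using \<open>t = Suc t'\<close> Suc by simp
      qed
      ultimately show ?thesis
        using step[of "Suc s"] prev less(2) \<open>t = Suc t'\<close> Suc by (auto simp: mod_if split: if_splits)
    qed (use \<open>g 1 = 1\<close> \<open>t = Suc t'\<close> in simp)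
  qed (use \<open>g 0 = 0\<close> in simp)
qed

lemma reflect_cyclic_successor:
  assumes "a < n" "b = Suc a mod n"
  shows "(n - a) mod n = Suc ((n - b) mod n) mod n"
proof (cases "Suc a < n")
  case True
  then show ?thesis using assms by (cases "a = 0") simp_all
next
  case False
  then have "n = Suc a" using assms(1) by simp
  then show ?thesis using assms(2) by (cases a) simp_all
qed

lemma cyclic_walk:
  fixes g :: "nat \<Rightarrow> nat"
  assumes "3 \<le> n" and inj: "inj_on g {..<n}" and range: "\<And>t. t < n \<Longrightarrow> g t < n"
    and "g 0 = 0"
    and step: "\<And>t. Suc t < n \<Longrightarrow> g (Suc t) = Suc (g t) mod n \<or> g t = Suc (g (Suc t)) mod n"
  shows "(\<forall>t<n. g t = t) \<or> (\<forall>t<n. g t = (n - t) mod n)"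
proof -
  have "g 1 = 1 \<or> g 1 = n - 1"
    using step[of 0] range[of 1] \<open>g 0 = 0\<close> assms(1) by (auto simp: mod_if split: if_splits)
  then show ?thesis
  proof (elim disjE)
    assume "g 1 = 1"
    then show ?thesis using cyclic_walk_forward[OF inj range \<open>g 0 = 0\<close>] step by blast
  next
    assume "g 1 = n - 1"
    \<comment> \<open>Reflecting the cycle turns the backward walk into a forward one.\<close>
    define h where "h t = (n - g t) mod n" for t
    have h_range: "h t < n" if "t < n" for t
      using assms(1) by (simp add: h_def)
    have g_h: "g t = (n - h t) mod n" if "t < n" for t
      using range[OF that] by (cases "g t = 0") (simp_all add: h_def)
    have "inj_on h {..<n}"
    proof (rule inj_onI)
      fix t t' assume "t \<in> {..<n}" "t' \<in> {..<n}" "h t = h t'"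
      then show "t = t'" using g_h inj_on_eq_iff[OF inj] by (metis lessThan_iff)
    qed
    moreover have "h 0 = 0" "h 1 = 1"
      using \<open>g 0 = 0\<close> \<open>g 1 = n - 1\<close> assms(1) by (simp_all add: h_def)
    moreover have "h (Suc t) = Suc (h t) mod n \<or> h t = Suc (h (Suc t)) mod n" if "Suc t < n" for t
      using step[OF that] reflect_cyclic_successor[of "g t" n "g (Suc t)"]
        reflect_cyclic_successor[of "g (Suc t)" n "g t"] range[of t] range[OF that] that
      unfolding h_def by auto
    ultimately have "h t = t" if "t < n" for t
      using cyclic_walk_forward[of h n] h_range that by blast
    then show ?thesis using g_h by simp
  qed
qed

lemma rotate_inverse:
  assumes "xs \<noteq> []"
  shows "rotate (length xs - k mod length xs) (rotate k xs) = xs"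
proof -
  let ?n = "length xs"
  have "k mod ?n < ?n" using assms by simp
  then have "(?n - k mod ?n + k) mod ?n = (?n - k mod ?n + k mod ?n) mod ?n"
    by (metis mod_add_right_eq)
  also have "\<dots> = 0" using \<open>k mod ?n < ?n\<close> by simp
  finally show ?thesis by (simp add: rotate_rotate)
qed

lemma same_circular_ordering_if_walk:
  assumes "length q = length p" "q \<noteq> []"
    and "(\<forall>t<length p. p ! t = rotate k q ! t)
      \<or> (\<forall>t<length p. p ! t = rotate k q ! ((length p - t) mod length p))"
  shows "same_circular_ordering p q"
  using assms(3)
proof (elim disjE)
  assume "\<forall>t<length p. p ! t = rotate k q ! t"
  then have "p = rotate k q" using assms(1) by (intro nth_equalityI) simp_all
  then show ?thesis
    unfolding same_circular_ordering_def using rotate_inverse[OF assms(2), of k] by metis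
next
  let ?n = "length p"
  assume backward: "\<forall>t<?n. p ! t = rotate k q ! ((?n - t) mod ?n)"
  have "rev p = rotate 1 (rotate k q)"
  proof (rule nth_equalityI)
    fix s assume "s < length (rev p)"
    then have s: "s < ?n" by simp
    have "rev p ! s = rotate k q ! ((?n - (?n - Suc s)) mod ?n)"
      using backward s by (simp add: rev_nth)
    also have "\<dots> = rotate 1 (rotate k q) ! s"
      using s assms(1) by (simp add: nth_rotate1)
    finally show "rev p ! s = rotate 1 (rotate k q) ! s" .
  qed (use assms(1) in simp)
  then have "rev p = rotate (Suc k) q" by (simp add: rotate_rotate)
  then show ?thesis
    unfolding same_circular_ordering_def using rotate_inverse[OF assms(2), of "Suc k"] by metis
qed

lemma same_circular_ordering_if_consecutive_arcs:
  assumes p: "distinct p" and q: "distinct q" "set q = set p" and n: "3 \<le> length p"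
    and arcs: "\<And>t. Suc t < length p \<Longrightarrow> is_arc q {p ! t, p ! Suc t}"
  shows "same_circular_ordering p q"
proof -
  define n where "n = length p"
  have lq: "length q = n"
    using distinct_card[OF p] distinct_card[OF q(1)] q(2) n_def by simp
  have "p ! 0 \<in> set q" unfolding q(2) using n by (intro nth_mem) linarith
  then obtain k where k: "k < n" "q ! k = p ! 0" using lq by (auto simp: in_set_conv_nth)
  define q' where "q' = rotate k q"
  have q': "distinct q'" "length q' = n" "set q' = set p"
    using q lq by (simp_all add: q'_def)
  have n0: "0 < n" using n n_def by linarith
  then have "q' ! 0 = p ! 0" using k lq by (simp add: q'_def nth_rotate)
  define g where "g t = (SOME w. w < n \<and> q' ! w = p ! t)" for t
  have g: "g t < n \<and> q' ! g t = p ! t" if "t < n" for t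
  proof -
    have "p ! t \<in> set q'" using that q'(3) n_def by simp
    then have "\<exists>w. w < n \<and> q' ! w = p ! t" using q'(2) by (auto simp: in_set_conv_nth)
    then show ?thesis unfolding g_def by (rule someI_ex)
  qed
  have g_eq: "g t = g t' \<longleftrightarrow> t = t'" if "t < n" "t' < n" for t t'
  proof
    assume "g t = g t'"
    then have "p ! t = p ! t'" using g[OF that(1)] g[OF that(2)] by simp
    then show "t = t'" using p that n_def by (simp add: nth_eq_iff_index_eq)
  qed simp
  have inj: "inj_on g {..<n}" using g_eq by (intro inj_onI) simp
  have g0: "g 0 = 0"
    using g[OF n0] nth_eq_iff_index_eq[OF q'(1), of "g 0" 0] q'(2) \<open>q' ! 0 = p ! 0\<close> n0 by simp
  have step: "g (Suc t) = Suc (g t) mod n \<or> g t = Suc (g (Suc t)) mod n" if "Suc t < n" for t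
  proof -
    have "is_arc q' {q' ! g t, q' ! g (Suc t)}"
      using arcs[of t] g[of t] g[OF that] that n_def is_arc_rotate[OF q(1)] by (simp add: q'_def)
    moreover have "g t \<noteq> g (Suc t)" using g_eq[of t "Suc t"] that by simp
    ultimately show ?thesis
      using is_arc_pair_iff[OF q'(1), of "g t" "g (Suc t)"] g[of t] g[OF that] q'(2) n n_def that
      by simp
  qed
  have "(\<forall>t<n. g t = t) \<or> (\<forall>t<n. g t = (n - t) mod n)"
    using cyclic_walk[OF _ inj _ g0 step] g n n_def by simp
  then have "(\<forall>t<n. p ! t = q' ! t) \<or> (\<forall>t<n. p ! t = q' ! ((n - t) mod n))"
    using g by (metis (no_types, lifting))
  moreover have "q \<noteq> []" using lq n0 by auto
  ultimately show ?thesis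
    using same_circular_ordering_if_walk[of q p k] lq n_def by (simp add: q'_def)
qed

section \<open>Counting common splits\<close>

lemma nth_mem_set_take_iff:
  assumes "distinct xs" "i < length xs"
  shows "xs ! i \<in> set (take m xs) \<longleftrightarrow> i < m"
proof
  assume "xs ! i \<in> set (take m xs)"
  then obtain j where "j < min m (length xs)" "xs ! j = xs ! i"
    by (auto simp: in_set_conv_nth)
  then show "i < m" using assms by (simp add: nth_eq_iff_index_eq)
next
  assume "i < m"
  then have "take m xs ! i = xs ! i" "i < length (take m xs)" using assms(2) by simp_all
  then show "xs ! i \<in> set (take m xs)" by (metis nth_mem)
qed

lemma end_if_is_arc_prefix_remove:
  assumes q: "distinct q" and m: "m < length q" and w: "w < m"
    and arc: "is_arc q (set (take m q) - {q ! w})"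
  shows "w = 0 \<or> w = m - 1"
proof (rule ccontr)
  let ?n = "length q"
  define M where "M = set (take m q) - {q ! w}"
  have mem: "q ! i \<in> M \<longleftrightarrow> i < m \<and> i \<noteq> w" if "i < ?n" for i
    using nth_mem_set_take_iff[OF q that] nth_eq_iff_index_eq[OF q that, of w] w m
    by (auto simp: M_def)
  assume "\<not> (w = 0 \<or> w = m - 1)"
  then have "0 < w" "w < m - 1" "q ! 0 \<in> M" "q ! (m - 1) \<in> M" "q ! w \<notin> M"
    using mem w m by (auto simp flip: length_greater_0_conv)
  from arc_convex_outside[OF q arc[folded M_def] this(1,2) _ this(3-5)] have "q ! m \<in> M"
    using m by simp
  then show False using mem[of m] m by simp
qed

lemma is_arc_pair_if_three_arcs_prefix:
  assumes q: "distinct q" and m: "m < length q"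
    and x: "x \<in> set (take m q)" and b: "b \<in> set (take m q)" "x \<noteq> b"
    and a: "a \<in> set q" "a \<notin> set (take m q)"
    and arc_x: "is_arc q (set (take m q) - {x})"
    and arc_b: "is_arc q (insert a (set (take m q) - {b}))"
  shows "is_arc q {x, a}"
proof -
  let ?n = "length q" and ?M = "set (take m q)"
  have mem: "q ! i \<in> ?M \<longleftrightarrow> i < m" if "i < ?n" for i
    using nth_mem_set_take_iff[OF q that] .
  have q_eq: "q ! i = q ! j \<longleftrightarrow> i = j" if "i < ?n" "j < ?n" for i j
    using q that by (simp add: nth_eq_iff_index_eq)
  obtain wx where wx: "wx < m" "x = q ! wx"
    using x m by (auto simp: in_set_conv_nth)
  obtain t where t: "t < m" "b = q ! t"
    using b m by (auto simp: in_set_conv_nth)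
  obtain s where s: "s < ?n" "a = q ! s"
    using a by (auto simp: in_set_conv_nth)
  have "wx \<noteq> t" using wx t b by auto
  have "m \<le> s" using mem[OF s(1)] s a by simp
  define Nb where "Nb = insert a (?M - {b})"
  have mem_b: "q ! i \<in> Nb \<longleftrightarrow> i = s \<or> (i < m \<and> i \<noteq> t)" if "i < ?n" for i
    using mem[OF that] q_eq[OF that, of t] q_eq[OF that, of s] s t m by (auto simp: Nb_def)
  have "3 \<le> ?n" using \<open>wx \<noteq> t\<close> wx t m by linarith
  then have "q \<noteq> []" by auto
  have end_x: "wx = 0 \<or> wx = m - 1"
    using end_if_is_arc_prefix_remove[OF q m wx(1)] arc_x wx(2) by simp
  show ?thesis
  proof (cases "wx = 0")
    case True
    have "0 < t" "t < s" "q ! 0 \<in> Nb" "q ! s \<in> Nb" "q ! t \<notin> Nb"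
      using mem_b[of 0] mem_b[of t] mem_b[of s] s t \<open>m \<le> s\<close> wx True \<open>wx \<noteq> t\<close> \<open>q \<noteq> []\<close>
      by auto
    from arc_convex_outside[OF q arc_b[folded Nb_def] this(1,2) s(1) this(3-5)]
    have "q ! (?n - 1) \<in> Nb" using s by simp
    then have "?n - 1 = s \<or> ?n - 1 < m" using mem_b[of "?n - 1"] \<open>q \<noteq> []\<close> by auto
    then have "s = ?n - 1" using s \<open>m \<le> s\<close> by linarith
    then have "0 = Suc s mod ?n" using \<open>q \<noteq> []\<close> by simp
    moreover have "0 < s" using \<open>0 < t\<close> \<open>t < s\<close> by linarith
    ultimately show ?thesis
      using is_arc_pair_iff[OF q \<open>3 \<le> ?n\<close>, of wx s] True wx s \<open>q \<noteq> []\<close> \<open>0 < s\<close> by simp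
  next
    case False
    then have "wx = m - 1" "t < m - 1" using end_x \<open>wx \<noteq> t\<close> t by auto
    have "m - 1 < s" "t < ?n" "t < m - 1 \<or> s < t" "q ! (m - 1) \<in> Nb" "q ! s \<in> Nb" "q ! t \<notin> Nb"
      using mem_b[of "m - 1"] mem_b[of t] mem_b[of s] s t m \<open>m \<le> s\<close> wx \<open>t < m - 1\<close> by auto
    from arc_convex_between[OF q arc_b[folded Nb_def] this(1) s(1) this(2-6)]
    have "q ! m \<in> Nb" using s \<open>m \<le> s\<close> m by simp
    then have "s = m" using mem_b[of m] m by simp
    then have "s = Suc wx mod ?n" using \<open>wx = m - 1\<close> wx m by simp
    then show ?thesis
      using is_arc_pair_iff[OF q \<open>3 \<le> ?n\<close>, of wx s] wx s m by simp
  qed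
qed

lemma is_arc_pair_if_three_arcs:
  assumes q: "distinct q" and M: "is_arc q M"
    and "x \<in> M" "b \<in> M" "x \<noteq> b" "a \<in> set q" "a \<notin> M"
    and "is_arc q (M - {x})" "is_arc q (insert a (M - {b}))"
  shows "is_arc q {x, a}"
proof -
  obtain r l where rl: "r < length q" "l < length q" "M = arc q r l"
    using M unfolding is_arc_def by blast
  then have "M = set (take l (rotate r q))"
    using set_take_rotate_eq_arc[of r q l] by simp
  then show ?thesis
    using is_arc_pair_if_three_arcs_prefix[of "rotate r q" l x b a] is_arc_rotate[OF q] assms rl(2)
    by simp
qed

definition segment :: "'a list \<Rightarrow> nat \<Rightarrow> nat \<Rightarrow> 'a set" where
  "segment xs i j = (!) xs ` {i..<j}"

lemma set_eq_image_nth: "set xs = (!) xs ` {..<length xs}"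
  by (auto simp: set_conv_nth)

lemma image_nth_diff:
  assumes "distinct xs" "I \<subseteq> {..<length xs}" "J \<subseteq> {..<length xs}"
  shows "(!) xs ` I - (!) xs ` J = (!) xs ` (I - J)"
  using inj_on_image_set_diff[OF inj_on_nth[OF assms(1)], of "{..<length xs}" I J] assms
  by auto

lemma arc_eq_segment:
  assumes "r + l \<le> length xs"
  shows "arc xs r l = segment xs r (r + l)"
  using assms unfolding arc_def segment_def cyclic_offset_def by force

lemma nontrivial_circular_split_segment:
  assumes c: "distinct c" and S: "nontrivial_split (set c) S" "circular_split c S"
  obtains i j where "i + 2 \<le> j" "j \<le> length c - 1" "j - i \<le> length c - 2"
    "S = {segment c i j, set c - segment c i j}"
proof -
  let ?n = "length c"
  have "c \<noteq> []" using S(2) unfolding circular_split_def by (elim exE conjE) auto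
  then have "\<exists>A. is_arc c A \<and> S = {A, set c - A}"
    using S(2) by (simp flip: circular_split_iff_is_arc)
  then obtain A where A: "is_arc c A" "S = {A, set c - A}" by (elim exE conjE)
  have "A \<subseteq> set c" using is_arc_subset[OF A(1)] .
  obtain B where B: "is_arc c B" "c ! (?n - 1) \<notin> B" "S = {B, set c - B}"
  proof (cases "c ! (?n - 1) \<in> A")
    case True
    have "S = {set c - A, set c - (set c - A)}"
      using A(2) \<open>A \<subseteq> set c\<close> by (simp add: double_diff insert_commute)
    with True is_arc_complement[OF c A(1)] show ?thesis by (intro that) auto
  qed (use A in blast)
  obtain r l where rl: "r < ?n" "0 < l" "l < ?n" "B = arc c r l"
    using B(1) unfolding is_arc_def by blast
  have "\<not> cyclic_offset ?n r (?n - 1) < l"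
    using B(2) rl nth_mem_arc_iff[OF c, of "?n - 1" r l] \<open>c \<noteq> []\<close> by simp
  moreover have "r \<le> ?n - 1" using rl(1) by linarith
  ultimately have "r + l \<le> ?n - 1" by (simp add: cyclic_offset_def)
  then have seg: "B = segment c r (r + l)" using rl(4) arc_eq_segment[of r l c] by simp
  have "card B = l" using card_arc[OF c rl(1)] rl by simp
  moreover have "card (set c - B) = ?n - l"
    using \<open>card B = l\<close> arc_subset[of c r l] finite_subset[OF arc_subset[of c r l]] rl(4)
    by (simp add: card_Diff_subset distinct_card[OF c])
  moreover have "\<forall>A\<in>S. 2 \<le> card A" using S(1) unfolding nontrivial_split_def by blast
  ultimately have "2 \<le> l" "2 \<le> ?n - l" using B(3) by auto
  then show ?thesis
    using that[of r "r + l"] \<open>r + l \<le> ?n - 1\<close> B(3) seg by simp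
qed

lemma segment_remove_first:
  assumes "distinct xs" "i < j" "j \<le> length xs"
  shows "segment xs i j - {xs ! i} = segment xs (Suc i) j"
proof -
  have "segment xs i j - {xs ! i} = (!) xs ` {i..<j} - (!) xs ` {i}"
    by (simp add: segment_def)
  also have "\<dots> = (!) xs ` ({i..<j} - {i})"
    by (rule image_nth_diff) (use assms in auto)
  also have "{i..<j} - {i} = {Suc i..<j}" by auto
  finally show ?thesis by (simp add: segment_def)
qed

lemma insert_last_segment_remove_last:
  assumes "distinct xs" "1 \<le> j" "j < length xs"
  shows "insert (xs ! (length xs - 1)) (segment xs 0 j - {xs ! (j - 1)})
    = set xs - segment xs (j - 1) (length xs - 1)"
proof -
  let ?n = "length xs"
  have "segment xs 0 j - {xs ! (j - 1)} = (!) xs ` {0..<j} - (!) xs ` {j - 1}"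
    by (simp add: segment_def)
  also have "\<dots> = (!) xs ` ({0..<j} - {j - 1})"
    by (rule image_nth_diff) (use assms in auto)
  finally have "insert (xs ! (?n - 1)) (segment xs 0 j - {xs ! (j - 1)})
      = (!) xs ` (insert (?n - 1) ({0..<j} - {j - 1}))" by simp
  also have "insert (?n - 1) ({0..<j} - {j - 1}) = {..<?n} - {j - 1..<?n - 1}"
    using assms by auto
  also have "(!) xs ` \<dots> = set xs - segment xs (j - 1) (?n - 1)"
    unfolding set_eq_image_nth segment_def by (rule image_nth_diff[symmetric]) (use assms in auto)
  finally show ?thesis .
qed

lemma segment_not_arc:
  assumes c: "distinct c" and q: "distinct q" "set q = set c"
    and not_adj: "\<not> is_arc q {c ! 0, c ! (length c - 1)}"
    and j: "2 \<le> j" "j \<le> length c - 2"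
    and arc_0: "is_arc q (segment c 0 j)" and arc_j: "is_arc q (segment c (j - 1) (length c - 1))"
  shows "3 \<le> j \<and> \<not> is_arc q (segment c 1 j)"
proof -
  let ?n = "length c"
  have compl: "is_arc q (set c - segment c (j - 1) (?n - 1))"
    using is_arc_complement[OF q(1) arc_j] q(2) by simp
  have "j \<noteq> 2"
  proof
    assume "j = 2"
    have "set c - segment c 1 (?n - 1) = (!) c ` ({..<?n} - {1..<?n - 1})"
      unfolding set_eq_image_nth segment_def by (rule image_nth_diff[OF c]) auto
    also have "{..<?n} - {1..<?n - 1} = {0, ?n - 1}" using j by auto
    finally show False using compl \<open>j = 2\<close> not_adj by simp
  qed
  moreover have "\<not> is_arc q (segment c 1 j)"
  proof
    assume arc_1: "is_arc q (segment c 1 j)"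
    have x: "segment c 0 j - {c ! 0} = segment c 1 j"
      using segment_remove_first[OF c, of 0 j] j by simp
    have b: "insert (c ! (?n - 1)) (segment c 0 j - {c ! (j - 1)})
        = set c - segment c (j - 1) (?n - 1)"
      using insert_last_segment_remove_last[OF c, of j] j by simp
    have "0 < ?n" "j - 1 < ?n" "?n - 1 < ?n" using j by linarith+
    then have "c ! 0 \<in> segment c 0 j" "c ! (j - 1) \<in> segment c 0 j" "c ! 0 \<noteq> c ! (j - 1)"
        "c ! (?n - 1) \<in> set q" "c ! (?n - 1) \<notin> segment c 0 j"
      using j c q(2) by (auto simp: segment_def nth_eq_iff_index_eq)
    from is_arc_pair_if_three_arcs[OF q(1) arc_0 this] arc_1 x b compl not_adj show False
      by simp
  qed
  ultimately show ?thesis using j by simp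
qed

lemma card_triangle_pairs:
  "2 * card {(i, j). 1 \<le> i \<and> i + 2 \<le> j \<and> j \<le> (m::nat)} = (m - 2) * (m - 1)"
proof (induction m)
  case (Suc m)
  let ?T = "\<lambda>m. {(i, j). 1 \<le> i \<and> i + 2 \<le> j \<and> j \<le> (m::nat)}"
  have "?T (Suc m) = ?T m \<union> (\<lambda>i. (i, Suc m)) ` {1..m - 1}" by auto
  moreover have "finite (?T m)"
    by (rule finite_subset[of _ "{0..m} \<times> {0..m}"]) auto
  moreover have "?T m \<inter> (\<lambda>i. (i, Suc m)) ` {1..m - 1} = {}" by auto
  moreover have "card ((\<lambda>i. (i, Suc m)) ` {1..m - 1}) = m - 1"
    by (subst card_image) (auto simp: inj_on_def)
  ultimately have "2 * card (?T (Suc m)) = (m - 2) * (m - 1) + 2 * (m - 1)"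
    using Suc by (simp add: card_Un_disjoint)
  also have "\<dots> = (Suc m - 2) * (Suc m - 1)"
    by (cases m; cases "m - 1") (simp_all add: algebra_simps)
  finally show ?case .
qed (simp add: card_eq_0_iff)

lemma card_pairs_le_triangle:
  fixes Q :: "nat \<Rightarrow> nat \<Rightarrow> bool"
  assumes key: "\<And>j. 2 \<le> j \<Longrightarrow> j \<le> n - 2 \<Longrightarrow> Q 0 j \<Longrightarrow> Q (j - 1) (n - 1)
    \<Longrightarrow> 3 \<le> j \<and> \<not> Q 1 j"
  shows "card {(i, j). i + 2 \<le> j \<and> j \<le> n - 1 \<and> j - i \<le> n - 2 \<and> Q i j}
    \<le> card {(i, j). 1 \<le> i \<and> i + 2 \<le> j \<and> j \<le> n - 1}" (is "card ?U \<le> card ?T")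
proof -
  \<comment> \<open>A pair (0, j) is sent to a pair where Q fails, so it cannot collide with a pair i \<ge> 1.\<close>
  define h where "h = (\<lambda>(i, j). if 1 \<le> i then (i, j)
    else if Q (j - 1) (n - 1) then (1, j) else (j - 1, n - 1))"
  have h_T: "h (i, j) \<in> ?T" and Q_h: "Q (fst (h (i, j))) (snd (h (i, j))) \<longleftrightarrow> 1 \<le> i"
    if "(i, j) \<in> ?U" for i j
  proof -
    have "(i, j) \<in> ?T \<and> Q i j" if "1 \<le> i" using that \<open>(i, j) \<in> ?U\<close> by simp
    moreover have "h (i, j) \<in> ?T \<and> \<not> Q (fst (h (i, j))) (snd (h (i, j)))" if "i = 0"
      using that \<open>(i, j) \<in> ?U\<close> key[of j] unfolding h_def by auto
    ultimately show "h (i, j) \<in> ?T" "Q (fst (h (i, j))) (snd (h (i, j))) \<longleftrightarrow> 1 \<le> i"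
      by (cases "1 \<le> i"; simp add: h_def)+
  qed
  have "inj_on h ?U"
  proof (rule inj_onI)
    fix u v assume u: "u \<in> ?U" and v: "v \<in> ?U" and "h u = h v"
    obtain i j i' j' where uv: "u = (i, j)" "v = (i', j')" by fastforce
    have "1 \<le> i \<longleftrightarrow> 1 \<le> i'"
      using Q_h[of i j] Q_h[of i' j'] u v uv \<open>h u = h v\<close> by simp
    then consider "1 \<le> i" "1 \<le> i'" | "i = 0" "i' = 0" by linarith
    then show "u = v"
    proof cases
      case 1
      then show ?thesis using \<open>h u = h v\<close> uv by (simp add: h_def)
    next
      case 2
      then have "2 \<le> j" "j \<le> n - 2" "2 \<le> j'" "j' \<le> n - 2" using u v uv by auto
      then show ?thesis using \<open>h u = h v\<close> uv 2 by (auto simp: h_def split: if_splits)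
    qed
  qed
  moreover have "h ` ?U \<subseteq> ?T"
  proof (rule image_subsetI)
    fix u assume "u \<in> ?U"
    moreover obtain i j where "u = (i, j)" by fastforce
    ultimately show "h u \<in> ?T" using h_T[of i j] by metis
  qed
  moreover have "finite ?T" by (rule finite_subset[of _ "{0..n} \<times> {0..n}"]) auto
  ultimately show ?thesis by (rule card_inj_on_le)
qed

lemma card_common_circular_splits_le:
  assumes c: "distinct c" and q: "distinct q" "set q = set c"
    and not_adj: "\<not> is_arc q {c ! 0, c ! (length c - 1)}"
  shows "2 * card {S. nontrivial_split (set c) S \<and> circular_split c S \<and> circular_split q S}
    \<le> (length c - 3) * (length c - 2)"
proof -
  let ?n = "length c"
  let ?CS = "{S. nontrivial_split (set c) S \<and> circular_split c S \<and> circular_split q S}"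
  let ?Q = "\<lambda>i j. is_arc q (segment c i j)"
  let ?U = "{(i, j). i + 2 \<le> j \<and> j \<le> ?n - 1 \<and> j - i \<le> ?n - 2 \<and> ?Q i j}"
  let ?T = "{(i, j). 1 \<le> i \<and> i + 2 \<le> j \<and> j \<le> ?n - 1}"
  have "?CS \<subseteq> (\<lambda>(i, j). {segment c i j, set c - segment c i j}) ` ?U"
  proof
    fix S assume "S \<in> ?CS"
    then have S: "nontrivial_split (set c) S" "circular_split c S" "circular_split q S" by simp_all
    obtain i j where ij: "i + 2 \<le> j" "j \<le> ?n - 1" "j - i \<le> ?n - 2"
      "S = {segment c i j, set c - segment c i j}"
      using nontrivial_circular_split_segment[OF c S(1,2)] by blast
    then have "?Q i j" using is_arc_if_mem_circular_split[OF q(1) S(3)] by simp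
    with ij show "S \<in> (\<lambda>(i, j). {segment c i j, set c - segment c i j}) ` ?U" by force
  qed
  moreover have "finite ?U" by (rule finite_subset[of _ "{0..?n} \<times> {0..?n}"]) auto
  ultimately have "card ?CS \<le> card ?U" by (meson card_image_le card_mono finite_imageI le_trans)
  also have "card ?U \<le> card ?T"
    using segment_not_arc[OF c q not_adj] by (intro card_pairs_le_triangle) blast
  finally have "2 * card ?CS \<le> 2 * card ?T" by simp
  also have "2 * card ?T = (?n - 1 - 2) * (?n - 1 - 1)" by (rule card_triangle_pairs)
  finally show ?thesis by (simp add: numeral_eq_Suc)
qed

lemma rotation_with_non_arc_ends:
  assumes p: "distinct p" and q: "distinct q" "set q = set p" "3 \<le> length p"
    and "\<not> same_circular_ordering p q"
  obtains k where "\<not> is_arc q {rotate k p ! 0, rotate k p ! (length p - 1)}"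
proof -
  let ?n = "length p"
  obtain t where t: "Suc t < ?n" "\<not> is_arc q {p ! t, p ! Suc t}"
    using same_circular_ordering_if_consecutive_arcs[OF assms(1-4)] assms(5) by blast
  have "p \<noteq> []" using t(1) by auto
  then have "rotate (Suc t) p ! 0 = p ! Suc t"
    using t(1) nth_rotate[of 0 p "Suc t"] by simp
  moreover have "rotate (Suc t) p ! (?n - 1) = p ! t"
  proof -
    have "Suc t + (?n - 1) = t + ?n" using t(1) by simp
    then have "(Suc t + (?n - 1)) mod ?n = t" using t(1) by simp
    then show ?thesis using t(1) \<open>p \<noteq> []\<close> nth_rotate[of "?n - 1" p "Suc t"] by simp
  qed
  ultimately show ?thesis using that[of "Suc t"] t(2) by (simp add: insert_commute)
qed

theorem theorem9:
  fixes X :: "'a set" and p q :: "'a list"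
  assumes "finite X" and "card X \<ge> 4"
    and "circular_ordering X p" and "circular_ordering X q"
    and "\<not> same_circular_ordering p q"
  shows "2 * card {S. nontrivial_split X S \<and> circular_split p S \<and> circular_split q S}
           \<le> (card X - 3) * (card X - 2)"
proof -
  have p: "distinct p" "set p = X" and q: "distinct q" "set q = X"
    using assms(3,4) by (auto simp: circular_ordering_def)
  then have n: "length p = card X" by (metis distinct_card)
  obtain k where k: "\<not> is_arc q {rotate k p ! 0, rotate k p ! (length p - 1)}"
    using rotation_with_non_arc_ends[OF p(1) q(1)] p q n assms(2,5) by auto
  have "p \<noteq> []" using n assms(2) by auto
  then have "circular_split (rotate k p) S \<longleftrightarrow> circular_split p S" for S
    by (rule circular_split_rotate)
  then show ?thesis
    using card_common_circular_splits_le[of "rotate k p" q] p q n k by simp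
qed

end
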